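(* Let $c\ge1$ and let $G$ be a finite nilpotent group of class $t\ge1$. For $2\le j\le t$ put $Q_j=G/\gamma_j(G)$ and for $1\le j\le t-1$ let $e_j=\min\{\exp(Q_{j+1}),\exp(\gamma_{j+1}(G))\}$. Then $$\exp(M^{(c)}(G))\le\exp(G/G')\prod_{j=1}^{t-1}e_j.$$ In particular, if $G$ is a $p$-group of exponent $p^e$, then $\exp(M^{(c)}(G))\le p^{et}$.
   Context: $\gamma_1(X)=X$, $\gamma_{i+1}(X)=[\gamma_i(X),X]$; $G'=\gamma_2(G)$. The $c$-nilpotent multiplier of $G\cong F/R$ ($F$ free) is $M^{(c)}(G)=(R\cap\gamma_{c+1}(F))/[R,{}_cF]$, where $[R,{}_0F]=R$, $[R,{}_{i+1}F]=[[R,{}_iF],F]$; it is independent of the presentation. $\exp(X)$ is the exponent of $X$. *)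

theory Defs
  imports "HOL-Algebra.Algebra"
begin

definition comm_subgroup :: "('a, 'b) monoid_scheme \<Rightarrow> 'a set \<Rightarrow> 'a set \<Rightarrow> 'a set" where
  "comm_subgroup G H K =
     generate G {inv\<^bsub>G\<^esub> a \<otimes>\<^bsub>G\<^esub> inv\<^bsub>G\<^esub> b \<otimes>\<^bsub>G\<^esub> a \<otimes>\<^bsub>G\<^esub> b | a b. a \<in> H \<and> b \<in> K}"

text \<open>Lower central series: gamma_1(G) = G, gamma_{i+1}(G) = [gamma_i(G), G].
  (gamma 0 is set to G as a harmless convention; it is never used.)\<close>
fun lcs :: "('a, 'b) monoid_scheme \<Rightarrow> nat \<Rightarrow> 'a set" where
  "lcs G 0 = carrier G"
| "lcs G (Suc 0) = carrier G"
| "lcs G (Suc (Suc i)) = comm_subgroup G (lcs G (Suc i)) (carrier G)"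

fun iter_comm :: "('a, 'b) monoid_scheme \<Rightarrow> 'a set \<Rightarrow> nat \<Rightarrow> 'a set" where
  "iter_comm F R 0 = R"
| "iter_comm F R (Suc i) = comm_subgroup F (iter_comm F R i) (carrier F)"

definition group_exponent :: "('a, 'b) monoid_scheme \<Rightarrow> nat" where
  "group_exponent G =
     (if \<exists>n::nat>0. \<forall>x\<in>carrier G. x [^]\<^bsub>G\<^esub> n = \<one>\<^bsub>G\<^esub>
      then LEAST n::nat. n > 0 \<and> (\<forall>x\<in>carrier G. x [^]\<^bsub>G\<^esub> n = \<one>\<^bsub>G\<^esub>)
      else 0)"

definition reduced_word :: "('a \<times> bool) list \<Rightarrow> bool" where
  "reduced_word w \<longleftrightarrow>
     (\<forall>i. Suc i < length w \<longrightarrow>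
        \<not> (fst (w ! i) = fst (w ! Suc i) \<and> snd (w ! i) \<noteq> snd (w ! Suc i)))"

definition word_eval :: "('a, 'b) monoid_scheme \<Rightarrow> ('a \<times> bool) list \<Rightarrow> 'a" where
  "word_eval G w =
     foldr (\<lambda>(x, s) acc. (if s then x else inv\<^bsub>G\<^esub> x) \<otimes>\<^bsub>G\<^esub> acc) w \<one>\<^bsub>G\<^esub>"

definition free_basis :: "('a, 'b) monoid_scheme \<Rightarrow> 'a set \<Rightarrow> bool" where
  "free_basis K B \<longleftrightarrow>
     B \<subseteq> carrier K \<and> generate K B = carrier K \<and>
     (\<forall>w. w \<noteq> [] \<and> set (map fst w) \<subseteq> B \<and> reduced_word w \<longrightarrow> word_eval K w \<noteq> \<one>\<^bsub>K\<^esub>)"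

definition free_group :: "('a, 'b) monoid_scheme \<Rightarrow> bool" where
  "free_group F \<longleftrightarrow> group F \<and> (\<exists>B. free_basis F B)"

text \<open>c-nilpotent multiplier of G = F/R, as the group (R \<inter> gamma_{c+1}(F)) / [R,_c F].\<close>
definition c_nilp_multiplier ::
  "('a, 'b) monoid_scheme \<Rightarrow> 'a set \<Rightarrow> nat \<Rightarrow> 'a set monoid" where
  "c_nilp_multiplier F R c =
     (F\<lparr>carrier := R \<inter> lcs F (Suc c)\<rparr>) Mod (iter_comm F R c)"

end

theory Submission
  imports Defs
begin

text \<open>
  Let \<open>h : F \<rightarrow> G\<close> be surjective with kernel \<open>R\<close>, so \<open>M\<^sup>(\<^sup>c\<^sup>)(G) = (R \<inter> \<gamma>\<^sub>c\<^sub>+\<^sub>1(F)) / [R,\<^sub>c F]\<close>.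
  Pull the lower central series of \<open>G\<close> back to \<open>F\<close>: \<open>\<Gamma>\<^sub>k = h\<^sup>-\<^sup>1(\<gamma>\<^sub>k(G))\<close>, a central series from
  \<open>\<Gamma>\<^sub>1 = F\<close> to \<open>\<Gamma>\<^sub>t\<^sub>+\<^sub>1 = R\<close>. The key lemma: if \<open>[Y, F, F] \<le> N\<close>, then modulo \<open>N\<close> the commutator
  map on \<open>Y \<times> F\<close> is bilinear with central values, so \<open>e\<close>-th powers of elements of \<open>[Y, F]\<close> lie in
  \<open>N\<close> as soon as \<open>[y\<^sup>e, b]\<close> or \<open>[y, b\<^sup>e]\<close> does for all generators. Iterating it along \<open>[S,\<^sub>i F]\<close>
  shows that an exponent moving \<open>\<Gamma>\<^sub>j\<close> into \<open>\<Gamma>\<^sub>j\<^sub>+\<^sub>1\<close> moves \<open>[\<Gamma>\<^sub>j,\<^sub>c F]\<close> into \<open>[\<Gamma>\<^sub>j\<^sub>+\<^sub>1,\<^sub>c F]\<close>; when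
  the exponent instead moves all of \<open>F\<close> into \<open>\<Gamma>\<^sub>j\<close>, the three subgroup lemma supplies the needed
  \<open>[\<Gamma>\<^sub>j, \<Gamma>\<^sub>j] \<le> [\<Gamma>\<^sub>j\<^sub>+\<^sub>1, F]\<close>. Walking from \<open>\<gamma>\<^sub>c\<^sub>+\<^sub>1(F) = [\<Gamma>\<^sub>1,\<^sub>c F]\<close> down to \<open>[R,\<^sub>c F]\<close> with the
  exponents \<open>exp(G/G')\<close> and \<open>e\<^sub>j\<close> gives the bound; each factor is at most \<open>exp G\<close>, giving \<open>p\<^sup>e\<^sup>t\<close>.
\<close>

section \<open>Commutators\<close>

definition commutator :: "('a, 'b) monoid_scheme \<Rightarrow> 'a \<Rightarrow> 'a \<Rightarrow> 'a" where
  "commutator G a b = inv\<^bsub>G\<^esub> a \<otimes>\<^bsub>G\<^esub> inv\<^bsub>G\<^esub> b \<otimes>\<^bsub>G\<^esub> a \<otimes>\<^bsub>G\<^esub> b"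

context group begin

lemma inv_mult_cancel_left [simp]: "x \<in> carrier G \<Longrightarrow> y \<in> carrier G \<Longrightarrow> inv x \<otimes> (x \<otimes> y) = y"
  by (simp add: m_assoc [symmetric])

lemma mult_inv_cancel_left [simp]: "x \<in> carrier G \<Longrightarrow> y \<in> carrier G \<Longrightarrow> x \<otimes> (inv x \<otimes> y) = y"
  by (simp add: m_assoc [symmetric])

lemmas commutator_simps = commutator_def m_assoc inv_mult_group

lemma commutator_closed [simp]: "a \<in> carrier G \<Longrightarrow> b \<in> carrier G \<Longrightarrow> commutator G a b \<in> carrier G"
  by (simp add: commutator_def)

lemma commutator_inv: "a \<in> carrier G \<Longrightarrow> b \<in> carrier G \<Longrightarrow> inv (commutator G a b) = commutator G b a"
  by (simp add: commutator_simps)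

lemma commutator_one_left [simp]: "b \<in> carrier G \<Longrightarrow> commutator G \<one> b = \<one>"
  by (simp add: commutator_simps)

lemma commutator_one_right [simp]: "a \<in> carrier G \<Longrightarrow> commutator G a \<one> = \<one>"
  by (simp add: commutator_simps)

lemma commutator_mult_left:
  "a \<in> carrier G \<Longrightarrow> a' \<in> carrier G \<Longrightarrow> b \<in> carrier G \<Longrightarrow>
   commutator G (a \<otimes> a') b = inv a' \<otimes> commutator G a b \<otimes> a' \<otimes> commutator G a' b"
  by (simp add: commutator_simps)

lemma commutator_mult_right:
  "a \<in> carrier G \<Longrightarrow> b \<in> carrier G \<Longrightarrow> b' \<in> carrier G \<Longrightarrow>
   commutator G a (b \<otimes> b') = commutator G a b' \<otimes> inv b' \<otimes> commutator G a b \<otimes> b'"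
  by (simp add: commutator_simps)

lemma commutator_eq_one_imp_commute:
  assumes "a \<in> carrier G" "b \<in> carrier G" "commutator G a b = \<one>"
  shows "a \<otimes> b = b \<otimes> a"
proof -
  have "a \<otimes> b = b \<otimes> a \<otimes> commutator G a b" using assms(1,2) by (simp add: commutator_simps)
  then show ?thesis using assms by simp
qed

lemma hall_witt:
  "x \<in> carrier G \<Longrightarrow> y \<in> carrier G \<Longrightarrow> z \<in> carrier G \<Longrightarrow>
   (inv y \<otimes> commutator G (commutator G x (inv y)) z \<otimes> y)
   \<otimes> (inv z \<otimes> commutator G (commutator G y (inv z)) x \<otimes> z)
   \<otimes> (inv x \<otimes> commutator G (commutator G z (inv x)) y \<otimes> x) = \<one>"
  by (simp add: commutator_simps)

lemma commutator_pow_left: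
  assumes y: "y \<in> carrier G" and b: "b \<in> carrier G"
    and central: "\<And>m g. g \<in> carrier G \<Longrightarrow> commutator G (y [^] (m::nat)) b \<otimes> g = g \<otimes> commutator G (y [^] m) b"
  shows "commutator G (y [^] (n::nat)) b = commutator G y b [^] n"
proof (induction n)
  case 0
  show ?case using b by simp
next
  case (Suc n)
  have "commutator G (y [^] Suc n) b = inv y \<otimes> (commutator G (y [^] n) b \<otimes> y) \<otimes> commutator G y b"
    using commutator_mult_left[of "y [^] n" y b] y b by (simp add: m_assoc)
  also have "\<dots> = commutator G (y [^] n) b \<otimes> commutator G y b"
    using central[OF y, of n] y b by simp
  finally show ?case using Suc.IH by simp
qed

lemma commutator_pow_right:
  assumes y: "y \<in> carrier G" and b: "b \<in> carrier G"
    and central: "\<And>m g. g \<in> carrier G \<Longrightarrow> commutator G y (b [^] (m::nat)) \<otimes> g = g \<otimes> commutator G y (b [^] m)"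
  shows "commutator G y (b [^] (n::nat)) = commutator G y b [^] n"
proof (induction n)
  case 0
  show ?case using y by simp
next
  case (Suc n)
  have "commutator G y (b [^] Suc n) = commutator G y b \<otimes> (inv b \<otimes> (commutator G y (b [^] n) \<otimes> b))"
    using commutator_mult_right[of y "b [^] n" b] y b by (simp add: m_assoc)
  also have "\<dots> = commutator G y b \<otimes> commutator G y (b [^] n)"
    using central[OF b, of n] y b by simp
  also have "\<dots> = commutator G y (b [^] n) \<otimes> commutator G y b"
    using central[of "commutator G y b" n] y b by simp
  finally show ?case using Suc.IH by simp
qed

end

lemma (in group_hom) hom_commutator:
  "a \<in> carrier G \<Longrightarrow> b \<in> carrier G \<Longrightarrow> h (commutator G a b) = commutator H (h a) (h b)"
  by (simp add: commutator_def)

section \<open>Commutator subgroups, lower central series and iterated commutators\<close>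

context group begin

lemma normal_subset: "N \<lhd> G \<Longrightarrow> N \<subseteq> carrier G"
  using normal_imp_subgroup subgroup.subset by blast

lemma comm_subgroup_eq: "comm_subgroup G A B = generate G {commutator G a b | a b. a \<in> A \<and> b \<in> B}"
  unfolding comm_subgroup_def commutator_def by simp

lemma comm_subgroup_subgroup:
  "A \<subseteq> carrier G \<Longrightarrow> B \<subseteq> carrier G \<Longrightarrow> subgroup (comm_subgroup G A B) G"
  unfolding comm_subgroup_eq by (rule generate_is_subgroup) (auto intro!: commutator_closed)

lemma commutator_in_comm_subgroup: "a \<in> A \<Longrightarrow> b \<in> B \<Longrightarrow> commutator G a b \<in> comm_subgroup G A B"
  unfolding comm_subgroup_eq by (rule generate.incl) auto

lemma comm_subgroup_least:
  "subgroup N G \<Longrightarrow> A \<subseteq> carrier G \<Longrightarrow> B \<subseteq> carrier G \<Longrightarrow>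
   (\<And>a b. a \<in> A \<Longrightarrow> b \<in> B \<Longrightarrow> commutator G a b \<in> N) \<Longrightarrow> comm_subgroup G A B \<subseteq> N"
  unfolding comm_subgroup_eq by (rule generate_subgroup_incl) auto

lemma comm_subgroup_mono: "A \<subseteq> A' \<Longrightarrow> B \<subseteq> B' \<Longrightarrow> comm_subgroup G A B \<subseteq> comm_subgroup G A' B'"
  unfolding comm_subgroup_eq by (rule mono_generate) auto

lemma comm_subgroup_normal:
  assumes N: "N \<lhd> G" shows "comm_subgroup G N (carrier G) \<lhd> G"
  unfolding comm_subgroup_eq
proof (rule normal_generateI)
  have "N \<subseteq> carrier G" using normal_subset[OF N] .
  then show "{commutator G a b |a b. a \<in> N \<and> b \<in> carrier G} \<subseteq> carrier G" by auto
  fix u g assume "u \<in> {commutator G a b |a b. a \<in> N \<and> b \<in> carrier G}" and g: "g \<in> carrier G"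
  then obtain a b where u: "u = commutator G a b" and a: "a \<in> N" and b: "b \<in> carrier G" by blast
  have "a \<in> carrier G" using a \<open>N \<subseteq> carrier G\<close> by blast
  then have "g \<otimes> u \<otimes> inv g = commutator G (g \<otimes> a \<otimes> inv g) (g \<otimes> b \<otimes> inv g)"
    using b g unfolding u by (simp add: commutator_simps)
  moreover have "g \<otimes> a \<otimes> inv g \<in> N" using normal.inv_op_closed2[OF N g a] .
  ultimately show "g \<otimes> u \<otimes> inv g \<in> {commutator G a b |a b. a \<in> N \<and> b \<in> carrier G}"
    using b g by blast
qed

lemma comm_subgroup_le:
  assumes N: "N \<lhd> G" shows "comm_subgroup G N (carrier G) \<subseteq> N"
proof (rule comm_subgroup_least)
  show sub: "subgroup N G" using N normal_imp_subgroup by blast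
  then show Nc: "N \<subseteq> carrier G" using subgroup.subset by blast
  fix a b assume a: "a \<in> N" and b: "b \<in> carrier G"
  have "commutator G a b = inv a \<otimes> (inv b \<otimes> a \<otimes> b)"
    using a b Nc by (auto simp: commutator_simps)
  then show "commutator G a b \<in> N"
    using normal.inv_op_closed1[OF N b a] subgroup.m_inv_closed[OF sub a] subgroup.m_closed[OF sub] by simp
qed simp

lemma lcs_normal: "lcs G k \<lhd> G"
proof -
  have "lcs G (Suc i) \<lhd> G" for i
    by (induction i) (simp_all add: normal_self comm_subgroup_normal)
  then show ?thesis by (cases k) (simp_all add: normal_self)
qed

lemma lcs_subset: "lcs G k \<subseteq> carrier G"
  using normal_subset[OF lcs_normal] .

lemma lcs_Suc_le: "lcs G (Suc k) \<subseteq> lcs G k"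
  by (cases k) (simp_all add: comm_subgroup_le[OF lcs_normal])

lemma lcs_antimono: "j \<le> k \<Longrightarrow> lcs G k \<subseteq> lcs G j"
  by (induction k rule: dec_induct) (use lcs_Suc_le in blast)+

lemma lcs_eq_iter_comm: "lcs G (Suc c) = iter_comm G (carrier G) c"
  by (induction c) auto

lemma iter_comm_normal: "R \<lhd> G \<Longrightarrow> iter_comm G R i \<lhd> G"
  by (induction i) (auto intro: comm_subgroup_normal)

lemma iter_comm_mono: "R \<subseteq> R' \<Longrightarrow> iter_comm G R i \<subseteq> iter_comm G R' i"
  by (induction i) (auto intro: comm_subgroup_mono[THEN subsetD])

lemma iter_comm_Suc': "iter_comm G R (Suc i) = iter_comm G (comm_subgroup G R (carrier G)) i"
  by (induction i) auto

lemma iter_comm_shift_le: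
  "comm_subgroup G S (carrier G) \<subseteq> R \<Longrightarrow> iter_comm G S (Suc i) \<subseteq> iter_comm G R i"
  using iter_comm_Suc'[of S i] iter_comm_mono[of _ R i] by simp

end

section \<open>Exponents of finite groups, their quotients and subgroups\<close>

lemma group_exponent_pos_pow:
  assumes "group K" "finite (carrier K)"
  shows "group_exponent K > 0 \<and> (\<forall>x\<in>carrier K. x [^]\<^bsub>K\<^esub> group_exponent K = \<one>\<^bsub>K\<^esub>)"
proof -
  interpret K: group K by fact
  have ex: "\<exists>n::nat>0. \<forall>x\<in>carrier K. x [^]\<^bsub>K\<^esub> n = \<one>\<^bsub>K\<^esub>"
    using K.order_gt_0_iff_finite assms(2) K.pow_order_eq_1 by blast
  then have "0 < (LEAST n::nat. n > 0 \<and> (\<forall>x\<in>carrier K. x [^]\<^bsub>K\<^esub> n = \<one>\<^bsub>K\<^esub>)) \<and>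
     (\<forall>x\<in>carrier K. x [^]\<^bsub>K\<^esub> (LEAST n::nat. n > 0 \<and> (\<forall>x\<in>carrier K. x [^]\<^bsub>K\<^esub> n = \<one>\<^bsub>K\<^esub>)) = \<one>\<^bsub>K\<^esub>)"
    by (rule LeastI_ex)
  then show ?thesis unfolding group_exponent_def using ex by simp
qed

lemma group_exponent_le:
  assumes "n > 0" "\<And>x. x \<in> carrier K \<Longrightarrow> x [^]\<^bsub>K\<^esub> (n::nat) = \<one>\<^bsub>K\<^esub>"
  shows "group_exponent K \<le> n"
proof -
  have ex: "\<exists>n::nat>0. \<forall>x\<in>carrier K. x [^]\<^bsub>K\<^esub> n = \<one>\<^bsub>K\<^esub>" using assms by blast
  have "(LEAST n::nat. n > 0 \<and> (\<forall>x\<in>carrier K. x [^]\<^bsub>K\<^esub> n = \<one>\<^bsub>K\<^esub>)) \<le> n"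
    by (rule Least_le) (use assms in blast)
  then show ?thesis unfolding group_exponent_def using ex by simp
qed

context group begin

lemma coset_eq_one_iff:
  assumes N: "N \<lhd> G" and x: "x \<in> carrier G"
  shows "N #> x = \<one>\<^bsub>G Mod N\<^esub> \<longleftrightarrow> x \<in> N"
  using coset_join1[OF _ x] coset_join2[OF x] normal_imp_subgroup[OF N] by (metis one_FactGroup)

lemma quotient_group_hom: "N \<lhd> G \<Longrightarrow> group_hom G (G Mod N) ((#>) N)"
  using normal.r_coset_hom_Mod normal.factorgroup_is_group
  by (auto simp: group_hom_def group_hom_axioms_def is_group)

lemma quotient_finite: "finite (carrier G) \<Longrightarrow> finite (carrier (G Mod N))"
  by (simp add: carrier_FactGroup)

lemma quotient_exponent_pos:
  "N \<lhd> G \<Longrightarrow> finite (carrier G) \<Longrightarrow> group_exponent (G Mod N) > 0"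
  using group_exponent_pos_pow normal.factorgroup_is_group quotient_finite by blast

lemma subgroup_exponent_pos:
  assumes L: "subgroup L G" and fin: "finite (carrier G)"
  shows "group_exponent (G\<lparr>carrier := L\<rparr>) > 0"
  using group_exponent_pos_pow[OF subgroup.subgroup_is_group[OF L is_group]]
    finite_subset[OF subgroup.subset[OF L] fin] by simp

lemma pow_quotient_exponent:
  assumes N: "N \<lhd> G" and fin: "finite (carrier G)" and g: "g \<in> carrier G"
  shows "g [^] group_exponent (G Mod N) \<in> N"
proof -
  interpret \<pi>: group_hom G "G Mod N" "(#>) N" using quotient_group_hom[OF N] .
  have "(N #> g) [^]\<^bsub>G Mod N\<^esub> group_exponent (G Mod N) = \<one>\<^bsub>G Mod N\<^esub>"
    using group_exponent_pos_pow[OF \<pi>.H.is_group quotient_finite[OF fin]] \<pi>.hom_closed[OF g] by blast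
  then have "N #> (g [^] group_exponent (G Mod N)) = \<one>\<^bsub>G Mod N\<^esub>"
    using \<pi>.hom_nat_pow[OF g] by simp
  then show ?thesis using coset_eq_one_iff[OF N] g nat_pow_closed by blast
qed

lemma quotient_exponent_le:
  assumes N: "N \<lhd> G" and n: "n > 0" and pow: "\<And>g. g \<in> carrier G \<Longrightarrow> g [^] (n::nat) \<in> N"
  shows "group_exponent (G Mod N) \<le> n"
proof (rule group_exponent_le[OF n])
  interpret \<pi>: group_hom G "G Mod N" "(#>) N" using quotient_group_hom[OF N] .
  fix C assume "C \<in> carrier (G Mod N)"
  then obtain g where g: "g \<in> carrier G" "C = N #> g" by (auto simp: carrier_FactGroup)
  then have "C [^]\<^bsub>G Mod N\<^esub> n = N #> (g [^] n)" using \<pi>.hom_nat_pow[OF g(1)] by simp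
  also have "\<dots> = \<one>\<^bsub>G Mod N\<^esub>"
    using coset_eq_one_iff[OF N] g(1) nat_pow_closed pow by blast
  finally show "C [^]\<^bsub>G Mod N\<^esub> n = \<one>\<^bsub>G Mod N\<^esub>" .
qed

lemma pow_subgroup_exponent:
  assumes L: "subgroup L G" and fin: "finite (carrier G)" and y: "y \<in> L"
  shows "y [^] group_exponent (G\<lparr>carrier := L\<rparr>) = \<one>"
proof -
  have "y [^]\<^bsub>G\<lparr>carrier := L\<rparr>\<^esub> group_exponent (G\<lparr>carrier := L\<rparr>) = \<one>\<^bsub>G\<lparr>carrier := L\<rparr>\<^esub>"
    using group_exponent_pos_pow[OF subgroup.subgroup_is_group[OF L is_group]]
      finite_subset[OF subgroup.subset[OF L] fin] y by simp
  then show ?thesis using nat_pow_consistent by simp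
qed

end

context group begin

lemma iter_comm_le: "R \<lhd> G \<Longrightarrow> iter_comm G R i \<subseteq> R"
  by (induction i) (use comm_subgroup_le[OF iter_comm_normal] in fastforce)+

lemma multiplier_exponent_le:
  assumes R: "R \<lhd> G" and n: "n > 0"
    and pow: "\<And>x. x \<in> R \<inter> lcs G (Suc c) \<Longrightarrow> x [^] (n::nat) \<in> iter_comm G R c"
  shows "group_exponent (c_nilp_multiplier G R c) \<le> n"
proof -
  let ?K = "R \<inter> lcs G (Suc c)" and ?S = "iter_comm G R c"
  have K: "subgroup ?K G"
    using subgroups_Inter_pair normal_imp_subgroup[OF R] normal_imp_subgroup[OF lcs_normal] by blast
  have "?S \<subseteq> lcs G (Suc c)"
    using iter_comm_mono[of R "carrier G" c] normal_subset[OF R] lcs_eq_iter_comm by simp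
  then have S: "?S \<lhd> G\<lparr>carrier := ?K\<rparr>"
    using normal_restrict_supergroup[OF K iter_comm_normal[OF R]] iter_comm_le[OF R] by blast
  interpret K: group "G\<lparr>carrier := ?K\<rparr>" using subgroup.subgroup_is_group[OF K is_group] .
  show ?thesis unfolding c_nilp_multiplier_def
    by (rule K.quotient_exponent_le[OF S n]) (use pow nat_pow_consistent in simp)
qed

end

section \<open>Power laws for commutator subgroups\<close>

lemma (in group_hom) pow_generate_in_kernel:
  assumes S: "S \<subseteq> carrier G"
    and central: "\<And>x y. x \<in> generate G S \<Longrightarrow> y \<in> generate G S \<Longrightarrow> h x \<otimes>\<^bsub>H\<^esub> h y = h y \<otimes>\<^bsub>H\<^esub> h x"
    and gens: "\<And>s. s \<in> S \<Longrightarrow> h s [^]\<^bsub>H\<^esub> e = \<one>\<^bsub>H\<^esub>"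
    and x: "x \<in> generate G S"
  shows "h (x [^] (e::nat)) = \<one>\<^bsub>H\<^esub>"
proof -
  have "h x [^]\<^bsub>H\<^esub> e = \<one>\<^bsub>H\<^esub>" using x
  proof (induction x rule: generate.induct)
    case (inv s)
    then have "s \<in> carrier G" using S by blast
    then show ?case using gens[OF inv] H.nat_pow_inv by simp
  next
    case (eng x y)
    have xy: "x \<in> carrier G" "y \<in> carrier G" using eng.hyps G.generate_in_carrier[OF S] by auto
    have "h (x \<otimes> y) [^]\<^bsub>H\<^esub> e = h x [^]\<^bsub>H\<^esub> e \<otimes>\<^bsub>H\<^esub> h y [^]\<^bsub>H\<^esub> e"
      using H.pow_mult_distrib[OF central[OF eng.hyps]] xy by simp
    then show ?case using eng.IH by simp
  qed (use gens in simp_all)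
  then show ?thesis using hom_nat_pow G.generate_in_carrier[OF S x] by simp
qed

lemma (in group_hom) commutator_pow_left_image:
  assumes y: "y \<in> carrier G" and b: "b \<in> carrier G"
    and central: "\<And>m q. q \<in> carrier H \<Longrightarrow>
       h (commutator G (y [^] (m::nat)) b) \<otimes>\<^bsub>H\<^esub> q = q \<otimes>\<^bsub>H\<^esub> h (commutator G (y [^] m) b)"
  shows "h (commutator G (y [^] (n::nat)) b) = h (commutator G y b) [^]\<^bsub>H\<^esub> n"
proof -
  have img: "h (commutator G (y [^] m) b) = commutator H (h y [^]\<^bsub>H\<^esub> m) (h b)" for m :: nat
    using hom_commutator[of "y [^] m" b] hom_nat_pow y b by simp
  have "commutator H (h y [^]\<^bsub>H\<^esub> n) (h b) = commutator H (h y) (h b) [^]\<^bsub>H\<^esub> n"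
    using H.commutator_pow_left[of "h y" "h b" n] central[unfolded img] y b by simp
  then show ?thesis unfolding img hom_commutator[OF y b] .
qed

lemma (in group_hom) commutator_pow_right_image:
  assumes y: "y \<in> carrier G" and b: "b \<in> carrier G"
    and central: "\<And>m q. q \<in> carrier H \<Longrightarrow>
       h (commutator G y (b [^] (m::nat))) \<otimes>\<^bsub>H\<^esub> q = q \<otimes>\<^bsub>H\<^esub> h (commutator G y (b [^] m))"
  shows "h (commutator G y (b [^] (n::nat))) = h (commutator G y b) [^]\<^bsub>H\<^esub> n"
proof -
  have img: "h (commutator G y (b [^] m)) = commutator H (h y) (h b [^]\<^bsub>H\<^esub> m)" for m :: nat
    using hom_commutator[of y "b [^] m"] hom_nat_pow y b by simp
  have "commutator H (h y) (h b [^]\<^bsub>H\<^esub> n) = commutator H (h y) (h b) [^]\<^bsub>H\<^esub> n"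
    using H.commutator_pow_right[of "h y" "h b" n] central[unfolded img] y b by simp
  then show ?thesis unfolding img hom_commutator[OF y b] .
qed

context group begin

lemma coset_central:
  assumes N: "N \<lhd> G" and u: "u \<in> carrier G" and comm: "\<And>g. g \<in> carrier G \<Longrightarrow> commutator G u g \<in> N"
    and q: "q \<in> carrier (G Mod N)"
  shows "(N #> u) \<otimes>\<^bsub>G Mod N\<^esub> q = q \<otimes>\<^bsub>G Mod N\<^esub> (N #> u)"
proof -
  interpret \<pi>: group_hom G "G Mod N" "(#>) N" using quotient_group_hom[OF N] .
  obtain g where g: "g \<in> carrier G" and q: "q = N #> g" using q by (auto simp: carrier_FactGroup)
  have "commutator (G Mod N) (N #> u) (N #> g) = N #> commutator G u g"
    using \<pi>.hom_commutator[OF u g] by simp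
  also have "\<dots> = \<one>\<^bsub>G Mod N\<^esub>" using coset_eq_one_iff[OF N] comm[OF g] u g by simp
  finally show ?thesis using \<pi>.H.commutator_eq_one_imp_commute \<pi>.hom_closed u g q by simp
qed

lemma comm_subgroup_coset_central:
  assumes Y: "Y \<lhd> G" and N: "N \<lhd> G"
    and YGG: "comm_subgroup G (comm_subgroup G Y (carrier G)) (carrier G) \<subseteq> N"
    and u: "u \<in> comm_subgroup G Y (carrier G)" and q: "q \<in> carrier (G Mod N)"
  shows "(N #> u) \<otimes>\<^bsub>G Mod N\<^esub> q = q \<otimes>\<^bsub>G Mod N\<^esub> (N #> u)"
proof -
  have "u \<in> carrier G" using u comm_subgroup_subgroup[OF normal_subset[OF Y]] subgroup.subset by blast
  then show ?thesis using coset_central[OF N _ _ q] YGG commutator_in_comm_subgroup[OF u] by blast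
qed

lemma commutator_pow_mod:
  assumes Y: "Y \<lhd> G" and N: "N \<lhd> G"
    and YGG: "comm_subgroup G (comm_subgroup G Y (carrier G)) (carrier G) \<subseteq> N"
    and y: "y \<in> Y" and b: "b \<in> carrier G"
  shows "N #> commutator G (y [^] n) b = (N #> commutator G y b) [^]\<^bsub>G Mod N\<^esub> (n::nat)"
    and "N #> commutator G y (b [^] n) = (N #> commutator G y b) [^]\<^bsub>G Mod N\<^esub> (n::nat)"
proof -
  interpret \<pi>: group_hom G "G Mod N" "(#>) N" using quotient_group_hom[OF N] .
  have yc: "y \<in> carrier G" using y normal_subset[OF Y] by blast
  have Ypow: "y [^] (m::nat) \<in> Y" for m
    using subgroup_int_pow_closed[OF normal_imp_subgroup[OF Y] y, of "int m"] by (metis int_pow_int)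
  note central = comm_subgroup_coset_central[OF Y N YGG]
  show "N #> commutator G (y [^] n) b = (N #> commutator G y b) [^]\<^bsub>G Mod N\<^esub> n"
    by (rule \<pi>.commutator_pow_left_image[OF yc b],
        rule central[OF commutator_in_comm_subgroup[OF Ypow b]])
  show "N #> commutator G y (b [^] n) = (N #> commutator G y b) [^]\<^bsub>G Mod N\<^esub> n"
    by (rule \<pi>.commutator_pow_right_image[OF yc b],
        rule central[OF commutator_in_comm_subgroup[OF y nat_pow_closed[OF b]]])
qed

text \<open>By bilinearity the generators \<open>[y, b]\<close> of \<open>[Y, G]\<close> then have \<open>e\<close>-th power
  in \<open>N\<close>, and since \<open>[Y, G]\<close> is abelian modulo \<open>N\<close>, so does every element of \<open>[Y, G]\<close>.\<close>
lemma comm_subgroup_pow_in_normal: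
  fixes e :: nat
  assumes Y: "Y \<lhd> G" and N: "N \<lhd> G"
    and YGG: "comm_subgroup G (comm_subgroup G Y (carrier G)) (carrier G) \<subseteq> N"
    and gens: "\<And>y b. y \<in> Y \<Longrightarrow> b \<in> carrier G \<Longrightarrow>
                 commutator G (y [^] e) b \<in> N \<or> commutator G y (b [^] e) \<in> N"
    and x: "x \<in> comm_subgroup G Y (carrier G)"
  shows "x [^] e \<in> N"
proof -
  interpret \<pi>: group_hom G "G Mod N" "(#>) N" using quotient_group_hom[OF N] .
  let ?Q = "G Mod N" and ?gens = "{commutator G y b | y b. y \<in> Y \<and> b \<in> carrier G}"
  have gens_c: "?gens \<subseteq> carrier G" using normal_subset[OF Y] by auto
  have pow_gen: "(N #> commutator G y b) [^]\<^bsub>?Q\<^esub> e = \<one>\<^bsub>?Q\<^esub>" if y: "y \<in> Y" and b: "b \<in> carrier G" for y b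
  proof -
    have yc: "y \<in> carrier G" using y normal_subset[OF Y] by blast
    from gens[OF y b] show ?thesis
    proof
      assume "commutator G (y [^] e) b \<in> N"
      then show ?thesis unfolding commutator_pow_mod(1)[OF Y N YGG y b, symmetric]
        using coset_eq_one_iff[OF N] yc b by simp
    next
      assume "commutator G y (b [^] e) \<in> N"
      then show ?thesis unfolding commutator_pow_mod(2)[OF Y N YGG y b, symmetric]
        using coset_eq_one_iff[OF N] yc b by simp
    qed
  qed
  have "N #> (x [^] e) = \<one>\<^bsub>?Q\<^esub>"
  proof (rule \<pi>.pow_generate_in_kernel[OF gens_c])
    show "x \<in> generate G ?gens" using x comm_subgroup_eq by simp
  next
    fix u v assume u: "u \<in> generate G ?gens" and v: "v \<in> generate G ?gens"
    have "u \<in> comm_subgroup G Y (carrier G)" using u comm_subgroup_eq by simp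
    moreover have "N #> v \<in> carrier ?Q" using \<pi>.hom_closed generate_in_carrier[OF gens_c v] .
    ultimately show "(N #> u) \<otimes>\<^bsub>?Q\<^esub> (N #> v) = (N #> v) \<otimes>\<^bsub>?Q\<^esub> (N #> u)"
      by (rule comm_subgroup_coset_central[OF Y N YGG])
  next
    fix s assume "s \<in> ?gens"
    then show "(N #> s) [^]\<^bsub>?Q\<^esub> e = \<one>\<^bsub>?Q\<^esub>" using pow_gen by blast
  qed
  moreover have "x \<in> carrier G" using x generate_in_carrier[OF gens_c] comm_subgroup_eq by simp
  ultimately show ?thesis using coset_eq_one_iff[OF N nat_pow_closed] by blast
qed

end

context group begin

lemma iter_comm_pow:
  fixes e :: nat
  assumes S: "S \<lhd> G" and R: "R \<lhd> G" and SR: "comm_subgroup G S (carrier G) \<subseteq> R"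
    and gens: "\<And>s b. s \<in> S \<Longrightarrow> b \<in> carrier G \<Longrightarrow>
                 commutator G (s [^] e) b \<in> comm_subgroup G R (carrier G) \<or>
                 commutator G s (b [^] e) \<in> comm_subgroup G R (carrier G)"
  shows "a \<in> iter_comm G S (Suc j) \<Longrightarrow> a [^] e \<in> iter_comm G R (Suc j)"
proof (induction j arbitrary: a)
  case 0
  have "comm_subgroup G (comm_subgroup G S (carrier G)) (carrier G) \<subseteq> comm_subgroup G R (carrier G)"
    using comm_subgroup_mono[OF SR] by blast
  then show ?case using comm_subgroup_pow_in_normal[OF S comm_subgroup_normal[OF R] _ gens] 0 by simp
next
  case (Suc j)
  let ?Y = "iter_comm G S (Suc j)" and ?N = "iter_comm G R (Suc (Suc j))"
  have YGG: "comm_subgroup G (comm_subgroup G ?Y (carrier G)) (carrier G) \<subseteq> ?N"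
    using comm_subgroup_mono[OF iter_comm_shift_le[OF SR, of "Suc j"]] by simp
  have pow: "commutator G (y [^] e) b \<in> ?N \<or> commutator G y (b [^] e) \<in> ?N"
    if "y \<in> ?Y" "b \<in> carrier G" for y b
    using commutator_in_comm_subgroup[OF Suc.IH[OF that(1)] that(2)] by simp
  have "a \<in> comm_subgroup G ?Y (carrier G)" using Suc.prems by simp
  then show ?case
    by (rule comm_subgroup_pow_in_normal[OF iter_comm_normal[OF S] iter_comm_normal[OF R] YGG, rotated])
      (rule pow)
qed

lemma three_subgroup_basic:
  assumes A: "A \<lhd> G" and B: "B \<lhd> G" and AB: "comm_subgroup G A (carrier G) \<subseteq> B"
    and a: "a \<in> A" and x: "x \<in> carrier G" and y: "y \<in> carrier G"
  shows "commutator G (commutator G x y) a \<in> comm_subgroup G B (carrier G)"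
proof -
  let ?N = "comm_subgroup G B (carrier G)" and ?c = "commutator G (commutator G x y) a"
  have N: "?N \<lhd> G" using comm_subgroup_normal[OF B] .
  have Nsub: "subgroup ?N G" using normal_imp_subgroup[OF N] .
  have ac: "a \<in> carrier G" using a normal_subset[OF A] by blast
  have inA: "inv a \<in> A" using subgroup.m_inv_closed[OF normal_imp_subgroup[OF A] a] .
  have "commutator G (inv a) (inv y) \<in> B"
    using subsetD[OF AB commutator_in_comm_subgroup[OF inA inv_closed[OF y]]] .
  then have B1: "commutator G (inv y) (inv a) \<in> B"
    using subgroup.m_inv_closed[OF normal_imp_subgroup[OF B]] commutator_inv[OF inv_closed[OF ac] inv_closed[OF y]]
    by metis
  have B2: "commutator G a (inv x) \<in> B"
    using subsetD[OF AB commutator_in_comm_subgroup[OF a inv_closed[OF x]]] .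
  define t2 where "t2 = inv a \<otimes> commutator G (commutator G (inv y) (inv a)) x \<otimes> a"
  define t3 where "t3 = inv x \<otimes> commutator G (commutator G a (inv x)) (inv y) \<otimes> x"
  have t2: "t2 \<in> ?N" unfolding t2_def
    by (rule normal.inv_op_closed1[OF N ac commutator_in_comm_subgroup[OF B1 x]])
  have t3: "t3 \<in> ?N" unfolding t3_def
    by (rule normal.inv_op_closed1[OF N x commutator_in_comm_subgroup[OF B2 inv_closed[OF y]]])
  have t23: "t2 \<in> carrier G" "t3 \<in> carrier G" using t2 t3 normal_subset[OF N] by auto
  have cc: "?c \<in> carrier G" using x y ac by simp
  have "(y \<otimes> ?c \<otimes> inv y) \<otimes> t2 \<otimes> t3 = \<one>"
    using hall_witt[OF x inv_closed[OF y] ac] y unfolding t2_def t3_def by simp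
  then have "(y \<otimes> ?c \<otimes> inv y) \<otimes> (t2 \<otimes> t3) = \<one>" using t23 cc y by (simp add: m_assoc)
  then have "inv (t2 \<otimes> t3) = y \<otimes> ?c \<otimes> inv y"
    by (rule inv_equality) (use t23 cc y in simp_all)
  then have "y \<otimes> ?c \<otimes> inv y \<in> ?N"
    using subgroup.m_inv_closed[OF Nsub subgroup.m_closed[OF Nsub t2 t3]] by argo
  then have "inv y \<otimes> (y \<otimes> ?c \<otimes> inv y) \<otimes> y \<in> ?N" using normal.inv_op_closed1[OF N y] by blast
  then show ?thesis using cc y by (simp add: m_assoc)
qed

lemma three_subgroup:
  assumes A: "A \<lhd> G" and B: "B \<lhd> G" and AB: "comm_subgroup G A (carrier G) \<subseteq> B"
    and a: "a \<in> A" and w: "w \<in> lcs G 2"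
  shows "commutator G w a \<in> comm_subgroup G B (carrier G)"
proof -
  let ?N = "comm_subgroup G B (carrier G)"
  have N: "?N \<lhd> G" using comm_subgroup_normal[OF B] .
  have Nsub: "subgroup ?N G" using normal_imp_subgroup[OF N] .
  have ac: "a \<in> carrier G" using a normal_subset[OF A] by blast
  have "w \<in> carrier G \<and> commutator G w a \<in> ?N"
    using w unfolding numeral_2_eq_2 lcs.simps comm_subgroup_eq[of "carrier G" "carrier G"]
  proof (induction w rule: generate.induct)
    case one
    then show ?case using ac subgroup.one_closed[OF Nsub] by simp
  next
    case (incl c)
    then show ?case using three_subgroup_basic[OF A B AB a] by auto
  next
    case (inv c)
    then obtain x y where "c = commutator G x y" "x \<in> carrier G" "y \<in> carrier G" by blast
    then show ?case using three_subgroup_basic[OF A B AB a, of y x] commutator_inv by simp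
  next
    case (eng u v)
    then have uv: "u \<in> carrier G" "v \<in> carrier G" by auto
    have "commutator G (u \<otimes> v) a = inv v \<otimes> commutator G u a \<otimes> v \<otimes> commutator G v a"
      using commutator_mult_left[OF uv ac] .
    moreover have "inv v \<otimes> commutator G u a \<otimes> v \<in> ?N"
      using normal.inv_op_closed1[OF N uv(2)] eng.IH by blast
    ultimately show ?case using eng.IH uv subgroup.m_closed[OF Nsub] by simp
  qed
  then show ?thesis by blast
qed

end

section \<open>The preimage of the lower central series under a presentation\<close>

definition lcs_preimage :: "('a, 'b) monoid_scheme \<Rightarrow> ('c, 'd) monoid_scheme \<Rightarrow> ('a \<Rightarrow> 'c) \<Rightarrow> nat \<Rightarrow> 'a set"
  where "lcs_preimage G H h k = {x \<in> carrier G. h x \<in> lcs H k}"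

context group_hom begin

abbreviation \<Gamma> where "\<Gamma> k \<equiv> lcs_preimage G H h k"

lemma lcs_preimage_normal: "\<Gamma> k \<lhd> G"
proof (rule G.normal_invI)
  have L: "subgroup (lcs H k) H" using normal_imp_subgroup[OF H.lcs_normal] .
  show "subgroup (\<Gamma> k) G"
  proof (rule G.subgroupI)
    show "\<Gamma> k \<subseteq> carrier G" "\<Gamma> k \<noteq> {}"
      unfolding lcs_preimage_def using subgroup.one_closed[OF L] by auto
    show "inv a \<in> \<Gamma> k" if "a \<in> \<Gamma> k" for a
      using that subgroup.m_inv_closed[OF L] unfolding lcs_preimage_def by auto
    show "a \<otimes> b \<in> \<Gamma> k" if "a \<in> \<Gamma> k" "b \<in> \<Gamma> k" for a b
      using that subgroup.m_closed[OF L] unfolding lcs_preimage_def by auto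
  qed
  show "x \<otimes> a \<otimes> inv x \<in> \<Gamma> k" if "x \<in> carrier G" "a \<in> \<Gamma> k" for x a
    using that normal.inv_op_closed2[OF H.lcs_normal] unfolding lcs_preimage_def by auto
qed

lemma lcs_preimage_one: "\<Gamma> (Suc 0) = carrier G"
  unfolding lcs_preimage_def by auto

lemma lcs_preimage_antimono: "j \<le> k \<Longrightarrow> \<Gamma> k \<subseteq> \<Gamma> j"
  unfolding lcs_preimage_def using H.lcs_antimono by blast

lemma kernel_subset_lcs_preimage: "kernel G H h \<subseteq> \<Gamma> k"
  unfolding lcs_preimage_def kernel_def using subgroup.one_closed[OF normal_imp_subgroup[OF H.lcs_normal]]
  by auto

lemma lcs_preimage_last: "lcs H (Suc t) = {\<one>\<^bsub>H\<^esub>} \<Longrightarrow> \<Gamma> (Suc t) = kernel G H h"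
  unfolding lcs_preimage_def kernel_def by auto

lemma comm_lcs_preimage:
  assumes k: "k \<ge> 1" shows "comm_subgroup G (\<Gamma> k) (carrier G) \<subseteq> \<Gamma> (Suc k)"
proof (rule G.comm_subgroup_least)
  show "subgroup (\<Gamma> (Suc k)) G" using normal_imp_subgroup[OF lcs_preimage_normal] .
  show "\<Gamma> k \<subseteq> carrier G" unfolding lcs_preimage_def by auto
  fix a b assume a: "a \<in> \<Gamma> k" and b: "b \<in> carrier G"
  obtain k' where k': "k = Suc k'" using k by (cases k) auto
  have "commutator H (h a) (h b) \<in> comm_subgroup H (lcs H k) (carrier H)"
    using H.commutator_in_comm_subgroup a b unfolding lcs_preimage_def by auto
  then show "commutator G a b \<in> \<Gamma> (Suc k)"
    using hom_commutator a b k' unfolding lcs_preimage_def by auto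
qed simp

lemma lcs_two_image:
  assumes surj: "h ` carrier G = carrier H"
  shows "lcs H 2 \<subseteq> h ` lcs G 2"
  unfolding numeral_2_eq_2 lcs.simps
proof (rule H.comm_subgroup_least)
  show "subgroup (h ` comm_subgroup G (carrier G) (carrier G)) H"
    using subgroup_img_is_subgroup[OF G.comm_subgroup_subgroup] by simp
  fix a b assume "a \<in> carrier H" "b \<in> carrier H"
  then obtain a' b' where "a' \<in> carrier G" "b' \<in> carrier G" "a = h a'" "b = h b'"
    using surj by (metis imageE)
  then show "commutator H a b \<in> h ` comm_subgroup G (carrier G) (carrier G)"
    using G.commutator_in_comm_subgroup hom_commutator by (metis imageI)
qed simp_all

lemma lcs_preimage_two_decomp:
  assumes surj: "h ` carrier G = carrier H" and y: "y \<in> \<Gamma> 2"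
  obtains g r where "g \<in> lcs G 2" "r \<in> kernel G H h" "y = g \<otimes> r"
proof -
  have yc: "y \<in> carrier G" and "h y \<in> lcs H 2" using y unfolding lcs_preimage_def by auto
  then obtain g where g: "g \<in> lcs G 2" "h g = h y" using lcs_two_image[OF surj] by (metis imageE subsetD)
  have gc: "g \<in> carrier G" using g(1) G.lcs_subset by blast
  have "inv g \<otimes> y \<in> kernel G H h" unfolding kernel_def using gc yc g(2) by simp
  moreover have "y = g \<otimes> (inv g \<otimes> y)" using gc yc by simp
  ultimately show ?thesis by (rule that[OF g(1)])
qed

text \<open>For \<open>k \<ge> 2\<close> the commutator of two elements of \<open>\<Gamma>\<^sub>k\<close> already lies in \<open>[\<Gamma>\<^sub>k\<^sub>+\<^sub>1, G]\<close>: write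
  the second one as \<open>g r\<close> with \<open>g \<in> \<gamma>\<^sub>2(G)\<close>, \<open>r \<in> ker h\<close>, and use \<open>[\<Gamma>\<^sub>k, \<gamma>\<^sub>2(G)] \<le> [\<Gamma>\<^sub>k\<^sub>+\<^sub>1, G]\<close>
  (three subgroup lemma) together with \<open>[\<Gamma>\<^sub>k, ker h] \<le> [\<Gamma>\<^sub>k\<^sub>+\<^sub>1, G]\<close>.\<close>
lemma commutator_lcs_preimage:
  assumes surj: "h ` carrier G = carrier H" and k: "k \<ge> 2"
    and s: "s \<in> \<Gamma> k" and s': "s' \<in> \<Gamma> k"
  shows "commutator G s s' \<in> comm_subgroup G (\<Gamma> (Suc k)) (carrier G)"
proof -
  let ?N = "comm_subgroup G (\<Gamma> (Suc k)) (carrier G)"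
  have N: "?N \<lhd> G" using G.comm_subgroup_normal[OF lcs_preimage_normal] .
  have Nsub: "subgroup ?N G" using normal_imp_subgroup[OF N] .
  have sc: "s \<in> carrier G" using s unfolding lcs_preimage_def by auto
  have "s' \<in> \<Gamma> 2" using lcs_preimage_antimono[OF k] s' by blast
  then obtain g r where g: "g \<in> lcs G 2" and r: "r \<in> kernel G H h" and s'_eq: "s' = g \<otimes> r"
    using lcs_preimage_two_decomp[OF surj] by blast
  have gc: "g \<in> carrier G" using g G.lcs_subset by blast
  have rc: "r \<in> carrier G" using r unfolding kernel_def by auto
  have "commutator G r s \<in> ?N"
    using G.commutator_in_comm_subgroup[OF subsetD[OF kernel_subset_lcs_preimage r] sc] .
  then have sr: "commutator G s r \<in> ?N"
    using subgroup.m_inv_closed[OF Nsub] G.commutator_inv[OF rc sc] by metis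
  have "commutator G g s \<in> ?N"
    using G.three_subgroup[OF lcs_preimage_normal lcs_preimage_normal comm_lcs_preimage s g] k by simp
  then have "commutator G s g \<in> ?N"
    using subgroup.m_inv_closed[OF Nsub] G.commutator_inv[OF gc sc] by metis
  then have "inv r \<otimes> commutator G s g \<otimes> r \<in> ?N" using normal.inv_op_closed1[OF N rc] by blast
  then have "commutator G s r \<otimes> (inv r \<otimes> commutator G s g \<otimes> r) \<in> ?N"
    using subgroup.m_closed[OF Nsub sr] by blast
  then show ?thesis
    unfolding s'_eq G.commutator_mult_right[OF sc gc rc] using sc gc rc by (simp add: G.m_assoc)
qed

end

section \<open>The exponent bound for the \<open>c\<close>-nilpotent multiplier\<close>

context group_hom begin

lemma pow_quotient_exponent_lcs_preimage:
  assumes fin: "finite (carrier H)" and b: "b \<in> carrier G"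
  shows "b [^] group_exponent (H Mod lcs H k) \<in> \<Gamma> k"
  using H.pow_quotient_exponent[OF H.lcs_normal fin hom_closed[OF b]] hom_nat_pow[OF b] b
  unfolding lcs_preimage_def by simp

lemma pow_subgroup_exponent_lcs_preimage:
  assumes fin: "finite (carrier H)" and s: "s \<in> \<Gamma> k"
  shows "s [^] group_exponent (H\<lparr>carrier := lcs H k\<rparr>) \<in> \<Gamma> (Suc k)"
proof -
  have "h (s [^] group_exponent (H\<lparr>carrier := lcs H k\<rparr>)) = \<one>\<^bsub>H\<^esub>"
    using H.pow_subgroup_exponent[OF normal_imp_subgroup[OF H.lcs_normal] fin] s hom_nat_pow
    unfolding lcs_preimage_def by simp
  then have "s [^] group_exponent (H\<lparr>carrier := lcs H k\<rparr>) \<in> kernel G H h"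
    using s unfolding kernel_def lcs_preimage_def by simp
  then show ?thesis using kernel_subset_lcs_preimage by blast
qed

lemma pow_min_exponent_lcs_preimage:
  fixes k :: nat
  assumes fin: "finite (carrier H)"
  defines "e \<equiv> min (group_exponent (H Mod lcs H k)) (group_exponent (H\<lparr>carrier := lcs H k\<rparr>))"
  shows "(\<forall>s\<in>\<Gamma> k. s [^] e \<in> \<Gamma> (Suc k)) \<or> (\<forall>b\<in>carrier G. b [^] e \<in> \<Gamma> k)"
  unfolding e_def min_def
  using pow_quotient_exponent_lcs_preimage[OF fin] pow_subgroup_exponent_lcs_preimage[OF fin] by auto

lemma lcs_iter_comm_pow:
  fixes n0 :: nat and e :: "nat \<Rightarrow> nat"
  assumes surj: "h ` carrier G = carrier H" and c: "c \<ge> 1"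
    and n0: "\<And>b. b \<in> carrier G \<Longrightarrow> b [^] n0 \<in> \<Gamma> 2"
    and e: "\<And>j. j \<in> {1..m} \<Longrightarrow>
              (\<forall>s\<in>\<Gamma> (Suc j). s [^] e j \<in> \<Gamma> (Suc (Suc j))) \<or> (\<forall>b\<in>carrier G. b [^] e j \<in> \<Gamma> (Suc j))"
    and x: "x \<in> lcs G (Suc c)"
  shows "x [^] (n0 * (\<Prod>j\<in>{1..m}. e j)) \<in> iter_comm G (\<Gamma> (Suc (Suc m))) c"
  using e
proof (induction m)
  case 0
  obtain c' where c': "c = Suc c'" using c by (cases c) auto
  have "x \<in> iter_comm G (\<Gamma> (Suc 0)) (Suc c')" using x c' G.lcs_eq_iter_comm lcs_preimage_one by simp
  moreover have "commutator G (s [^] n0) b \<in> comm_subgroup G (\<Gamma> 2) (carrier G)"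
    if "s \<in> \<Gamma> (Suc 0)" "b \<in> carrier G" for s b
    using G.commutator_in_comm_subgroup[OF n0 that(2)] that(1) lcs_preimage_one by simp
  ultimately have "x [^] n0 \<in> iter_comm G (\<Gamma> 2) (Suc c')"
    using G.iter_comm_pow[OF lcs_preimage_normal lcs_preimage_normal comm_lcs_preimage[of "Suc 0"]]
    by (simp add: numeral_2_eq_2)
  then show ?case using c' by (simp add: numeral_2_eq_2)
next
  case (Suc m)
  obtain c' where c': "c = Suc c'" using c by (cases c) auto
  let ?S = "\<Gamma> (Suc (Suc m))" and ?R = "\<Gamma> (Suc (Suc (Suc m)))" and ?n = "n0 * (\<Prod>j\<in>{1..m}. e j)"
  have IH: "x [^] ?n \<in> iter_comm G ?S (Suc c')" using Suc c' by simp
  have gens: "commutator G (s [^] e (Suc m)) b \<in> comm_subgroup G ?R (carrier G) \<or>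
              commutator G s (b [^] e (Suc m)) \<in> comm_subgroup G ?R (carrier G)"
    if "s \<in> ?S" "b \<in> carrier G" for s b
    using Suc.prems[of "Suc m"] G.commutator_in_comm_subgroup that
      commutator_lcs_preimage[OF surj, of "Suc (Suc m)" s "b [^] e (Suc m)"] by auto
  have "(x [^] ?n) [^] e (Suc m) \<in> iter_comm G ?R (Suc c')"
    using G.iter_comm_pow[OF lcs_preimage_normal lcs_preimage_normal comm_lcs_preimage gens] IH by simp
  moreover have "x \<in> carrier G" using x G.lcs_subset by blast
  ultimately show ?case
    using c' by (simp add: G.nat_pow_pow atLeastAtMostSuc_conv ac_simps)
qed

theorem multiplier_exponent_bound:
  assumes surj: "h ` carrier G = carrier H" and fin: "finite (carrier H)"
    and c: "c \<ge> 1" and t: "t \<ge> 1" and nil: "lcs H (Suc t) = {\<one>\<^bsub>H\<^esub>}"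
  shows "group_exponent (c_nilp_multiplier G (kernel G H h) c)
           \<le> group_exponent (H Mod lcs H 2) *
             (\<Prod>j = 1..t - 1. min (group_exponent (H Mod lcs H (j + 1)))
                                   (group_exponent (H\<lparr>carrier := lcs H (j + 1)\<rparr>)))"
    (is "_ \<le> ?n0 * (\<Prod>j = 1..t - 1. ?e j)")
proof (rule G.multiplier_exponent_le[OF normal_kernel])
  show "?n0 * (\<Prod>j = 1..t - 1. ?e j) > 0"
    using H.quotient_exponent_pos[OF H.lcs_normal fin]
      H.subgroup_exponent_pos[OF normal_imp_subgroup[OF H.lcs_normal] fin] by simp
  have last: "\<Gamma> (Suc (Suc (t - 1))) = kernel G H h" using lcs_preimage_last[OF nil] t by simp
  fix x assume "x \<in> kernel G H h \<inter> lcs G (Suc c)"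
  then show "x [^] (?n0 * (\<Prod>j = 1..t - 1. ?e j)) \<in> iter_comm G (kernel G H h) c"
    using lcs_iter_comm_pow[OF surj c pow_quotient_exponent_lcs_preimage[OF fin], of "t - 1" ?e x]
      pow_min_exponent_lcs_preimage[OF fin] last by simp
qed

end

context group begin

lemma quotient_exponent_le_exponent:
  assumes N: "N \<lhd> G" and fin: "finite (carrier G)"
  shows "group_exponent (G Mod N) \<le> group_exponent G"
  using quotient_exponent_le[OF N] group_exponent_pos_pow[OF is_group fin]
    subgroup.one_closed[OF normal_imp_subgroup[OF N]] by simp

text \<open>Every factor of the bound is at most \<open>exp G\<close> (each \<open>e\<^sub>j \<le> exp(G/\<gamma>\<^sub>j\<^sub>+\<^sub>1)\<close>), so the bound is at most \<open>exp(G)\<^sup>t\<close>.\<close>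
lemma lcs_exponent_product_le:
  assumes fin: "finite (carrier G)" and t: "t \<ge> 1"
  shows "group_exponent (G Mod lcs G 2) *
           (\<Prod>j = 1..t - 1. min (group_exponent (G Mod lcs G (j + 1)))
                                 (group_exponent (G\<lparr>carrier := lcs G (j + 1)\<rparr>)))
         \<le> group_exponent G ^ t"
proof -
  let ?E = "group_exponent G"
  have pos: "?E \<ge> 1" using group_exponent_pos_pow[OF is_group fin] by simp
  have "(\<Prod>j = 1..t - 1. min (group_exponent (G Mod lcs G (j + 1)))
                            (group_exponent (G\<lparr>carrier := lcs G (j + 1)\<rparr>))) \<le> ?E ^ (t - 1)"
    by (rule prod_le_power) (use quotient_exponent_le_exponent[OF lcs_normal fin] pos in \<open>auto simp: min_le_iff_disj\<close>)
  then have "group_exponent (G Mod lcs G 2) * (\<Prod>j = 1..t - 1. min (group_exponent (G Mod lcs G (j + 1)))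
                            (group_exponent (G\<lparr>carrier := lcs G (j + 1)\<rparr>))) \<le> ?E * ?E ^ (t - 1)"
    using quotient_exponent_le_exponent[OF lcs_normal fin] by (rule mult_le_mono[rotated])
  also have "\<dots> = ?E ^ t" using t by (simp add: power_eq_if)
  finally show ?thesis .
qed

end

theorem corollary27:
  fixes G :: "('g, 'gb) monoid_scheme" and F :: "('f, 'fb) monoid_scheme"
    and \<phi> :: "'f \<Rightarrow> 'g" and c t :: nat
  assumes "c \<ge> 1"
    and "group G" and "finite (carrier G)"
    and "t \<ge> 1" and "lcs G (Suc t) = {\<one>\<^bsub>G\<^esub>}" and "lcs G t \<noteq> {\<one>\<^bsub>G\<^esub>}"
    and "free_group F" and "\<phi> \<in> hom F G" and "\<phi> ` carrier F = carrier G"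
  shows "group_exponent (c_nilp_multiplier F (kernel F G \<phi>) c)
           \<le> group_exponent (G Mod lcs G 2) *
             (\<Prod>j = 1..t - 1. min (group_exponent (G Mod lcs G (j + 1)))
                                   (group_exponent (G\<lparr>carrier := lcs G (j + 1)\<rparr>)))
       \<and> (\<forall>(p::nat) e n. Factorial_Ring.prime p \<and> card (carrier G) = p ^ n \<and> group_exponent G = p ^ e
            \<longrightarrow> group_exponent (c_nilp_multiplier F (kernel F G \<phi>) c) \<le> p ^ (e * t))"
proof -
  have "group F" using \<open>free_group F\<close> unfolding free_group_def by blast
  then interpret \<phi>: group_hom F G \<phi>
    using \<open>group G\<close> \<open>\<phi> \<in> hom F G\<close> by (simp add: group_hom_def group_hom_axioms_def)
  have bound: "group_exponent (c_nilp_multiplier F (kernel F G \<phi>) c)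
           \<le> group_exponent (G Mod lcs G 2) *
             (\<Prod>j = 1..t - 1. min (group_exponent (G Mod lcs G (j + 1)))
                                   (group_exponent (G\<lparr>carrier := lcs G (j + 1)\<rparr>)))"
    by (rule \<phi>.multiplier_exponent_bound) (use assms in simp_all)
  also have "\<dots> \<le> group_exponent G ^ t"
    by (rule \<phi>.H.lcs_exponent_product_le) (use assms in simp_all)
  finally have "group_exponent (c_nilp_multiplier F (kernel F G \<phi>) c) \<le> group_exponent G ^ t" .
  then show ?thesis using bound by (auto simp: power_mult)
qed

end
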